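(* Let $\mathbf A$ be a residuated semigroup satisfying $1_xy=y1_x$ for all $x,y$, where $1_x:=x/x$. Consider the conditions (each required for all $x,y\in A$): (H1) if $1_x=1_y$ then $1_{xy}=1_x$; (H2) if $1_x=1_y$ then $1_{x/y}=1_x$; (H3) if $1_x=1_y$ then $1_{x\backslash y}=1_x$. Then each of (H2) and (H3) implies that $x\backslash x=x/x$ for all $x\in A$; moreover (H2) and (H3) are equivalent, and (H2) implies (H1).
   Context: A residuated semigroup is a structure $\langle A,\le,\cdot,\backslash,/\rangle$ where $\langle A,\le\rangle$ is a poset, $\langle A,\cdot\rangle$ is a semigroup (we write $xy$ for $x\cdot y$), and for all $x,y,z$: $xy\le z\iff x\le z/y\iff y\le x\backslash z$. *)

theory Defs
  imports Main
begin

text \<open>A residuated semigroup on the whole type 'a, with order le, product mult,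
  left division ldiv (x\y = ldiv x y) and right division rdiv (x/y = rdiv x y).\<close>

definition residuated_semigroup ::
  "('a \<Rightarrow> 'a \<Rightarrow> bool) \<Rightarrow> ('a \<Rightarrow> 'a \<Rightarrow> 'a) \<Rightarrow> ('a \<Rightarrow> 'a \<Rightarrow> 'a) \<Rightarrow> ('a \<Rightarrow> 'a \<Rightarrow> 'a) \<Rightarrow> bool"
where
  "residuated_semigroup le mult ldiv rdiv \<longleftrightarrow>
     (\<forall>x. le x x) \<and>
     (\<forall>x y. le x y \<and> le y x \<longrightarrow> x = y) \<and>
     (\<forall>x y z. le x y \<and> le y z \<longrightarrow> le x z) \<and>
     (\<forall>x y z. mult (mult x y) z = mult x (mult y z)) \<and>
     (\<forall>x y z. (le (mult x y) z \<longleftrightarrow> le x (rdiv z y)) \<and>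
              (le (mult x y) z \<longleftrightarrow> le y (ldiv x z)))"

definition unit_of :: "('a \<Rightarrow> 'a \<Rightarrow> 'a) \<Rightarrow> 'a \<Rightarrow> 'a" where
  "unit_of rdiv x = rdiv x x"

definition H1 :: "('a \<Rightarrow> 'a \<Rightarrow> 'a) \<Rightarrow> ('a \<Rightarrow> 'a \<Rightarrow> 'a) \<Rightarrow> ('a \<Rightarrow> 'a \<Rightarrow> 'a) \<Rightarrow> bool" where
  "H1 mult ldiv rdiv \<longleftrightarrow> (\<forall>x y. unit_of rdiv x = unit_of rdiv y \<longrightarrow>
      unit_of rdiv (mult x y) = unit_of rdiv x)"

definition H2 :: "('a \<Rightarrow> 'a \<Rightarrow> 'a) \<Rightarrow> ('a \<Rightarrow> 'a \<Rightarrow> 'a) \<Rightarrow> ('a \<Rightarrow> 'a \<Rightarrow> 'a) \<Rightarrow> bool" where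
  "H2 mult ldiv rdiv \<longleftrightarrow> (\<forall>x y. unit_of rdiv x = unit_of rdiv y \<longrightarrow>
      unit_of rdiv (rdiv x y) = unit_of rdiv x)"

definition H3 :: "('a \<Rightarrow> 'a \<Rightarrow> 'a) \<Rightarrow> ('a \<Rightarrow> 'a \<Rightarrow> 'a) \<Rightarrow> ('a \<Rightarrow> 'a \<Rightarrow> 'a) \<Rightarrow> bool" where
  "H3 mult ldiv rdiv \<longleftrightarrow> (\<forall>x y. unit_of rdiv x = unit_of rdiv y \<longrightarrow>
      unit_of rdiv (ldiv x y) = unit_of rdiv x)"

end

theory Submission
  imports Defs
begin

(* In general 1_x <= x\x <= 1_(x\x) <= 1_(1_x), where the first and last
   steps use that local units are central. Hence x\x = 1_x as soon as 1_(1_x) = 1_x or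
   1_(x\x) = 1_x, which are the instances y = x of H2 and H3. Once left and right local units
   agree, the local units of x/y, x\y and xy are bounded below by 1_x and, through the identities
   z/(xy) = (z/y)/x and (x\y)/z = x\(y/z), bounded above by local units that H2 or H3
   identifies with 1_x. *)

locale residuated =
  fixes le :: "'a \<Rightarrow> 'a \<Rightarrow> bool" (infix "\<preceq>" 50)
    and mult :: "'a \<Rightarrow> 'a \<Rightarrow> 'a" (infixl "\<cdot>" 70)
    and ldiv :: "'a \<Rightarrow> 'a \<Rightarrow> 'a" (infix "\<setminus>" 75)
    and rdiv :: "'a \<Rightarrow> 'a \<Rightarrow> 'a" (infix "\<sslash>" 75)
  assumes residuated_semigroup: "residuated_semigroup (\<preceq>) (\<cdot>) (\<setminus>) (\<sslash>)"
begin

abbreviation local_unit :: "'a \<Rightarrow> 'a" ("\<one>\<^bsub>_\<^esub>")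
  where "\<one>\<^bsub>x\<^esub> \<equiv> x \<sslash> x"

lemma le_refl: "x \<preceq> x"
  and le_antisym: "x \<preceq> y \<Longrightarrow> y \<preceq> x \<Longrightarrow> x = y"
  and le_trans [trans]: "x \<preceq> y \<Longrightarrow> y \<preceq> z \<Longrightarrow> x \<preceq> z"
  and mult_assoc: "x \<cdot> y \<cdot> z = x \<cdot> (y \<cdot> z)"
  and le_rdiv_iff: "x \<preceq> z \<sslash> y \<longleftrightarrow> x \<cdot> y \<preceq> z"
  and le_ldiv_iff: "y \<preceq> x \<setminus> z \<longleftrightarrow> x \<cdot> y \<preceq> z"
  using residuated_semigroup unfolding residuated_semigroup_def by blast+

lemma eq_if_same_lower_bounds: "(\<And>t. t \<preceq> x \<longleftrightarrow> t \<preceq> y) \<Longrightarrow> x = y"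
  using le_refl le_antisym by blast

lemma rdiv_mult_le: "(x \<sslash> y) \<cdot> y \<preceq> x"
  using le_rdiv_iff le_refl by blast

lemma mult_ldiv_le: "x \<cdot> (x \<setminus> y) \<preceq> y"
  using le_ldiv_iff le_refl by blast

lemma mult_right_mono: "x \<preceq> y \<Longrightarrow> x \<cdot> z \<preceq> y \<cdot> z"
  using le_rdiv_iff le_refl le_trans by metis

lemma mult_left_mono: "x \<preceq> y \<Longrightarrow> z \<cdot> x \<preceq> z \<cdot> y"
  using le_ldiv_iff le_refl le_trans by metis

lemma rdiv_mult: "z \<sslash> (x \<cdot> y) = (z \<sslash> y) \<sslash> x"
  by (rule eq_if_same_lower_bounds) (simp add: le_rdiv_iff mult_assoc)

lemma ldiv_rdiv_assoc: "(x \<setminus> y) \<sslash> z = x \<setminus> (y \<sslash> z)"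
  by (rule eq_if_same_lower_bounds) (simp add: le_rdiv_iff le_ldiv_iff mult_assoc)

lemma local_unit_le_local_unit_mult: "\<one>\<^bsub>x\<^esub> \<preceq> \<one>\<^bsub>x \<cdot> y\<^esub>"
proof -
  have "\<one>\<^bsub>x\<^esub> \<cdot> x \<cdot> y \<preceq> x \<cdot> y"
    using rdiv_mult_le by (rule mult_right_mono)
  then show ?thesis
    by (simp add: le_rdiv_iff mult_assoc)
qed

lemma local_unit_le_local_unit_rdiv: "\<one>\<^bsub>x\<^esub> \<preceq> \<one>\<^bsub>x \<sslash> y\<^esub>"
proof -
  have "\<one>\<^bsub>x\<^esub> \<cdot> (x \<sslash> y) \<cdot> y \<preceq> \<one>\<^bsub>x\<^esub> \<cdot> x"
    unfolding mult_assoc using rdiv_mult_le by (rule mult_left_mono)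
  then have "\<one>\<^bsub>x\<^esub> \<cdot> (x \<sslash> y) \<cdot> y \<preceq> x"
    using rdiv_mult_le le_trans by blast
  then show ?thesis
    by (simp add: le_rdiv_iff)
qed

lemma ldiv_self_le_local_unit: "x \<setminus> x \<preceq> \<one>\<^bsub>x \<setminus> x\<^esub>"
proof -
  have "x \<cdot> (x \<setminus> x) \<cdot> (x \<setminus> x) \<preceq> x \<cdot> (x \<setminus> x)"
    using mult_ldiv_le by (rule mult_right_mono)
  then have "x \<cdot> ((x \<setminus> x) \<cdot> (x \<setminus> x)) \<preceq> x"
    using mult_ldiv_le le_trans mult_assoc by metis
  then show ?thesis
    by (simp add: le_rdiv_iff le_ldiv_iff)
qed

end

locale residuated_central_units = residuated +
  assumes local_unit_central: "\<one>\<^bsub>x\<^esub> \<cdot> y = y \<cdot> \<one>\<^bsub>x\<^esub>"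
begin

lemma local_unit_le_ldiv_self: "\<one>\<^bsub>x\<^esub> \<preceq> x \<setminus> x"
  using rdiv_mult_le local_unit_central le_ldiv_iff by metis

lemma local_unit_le_local_unit_rdiv_right: "\<one>\<^bsub>y\<^esub> \<preceq> \<one>\<^bsub>x \<sslash> y\<^esub>"
proof -
  have "\<one>\<^bsub>y\<^esub> \<cdot> (x \<sslash> y) \<cdot> y = (x \<sslash> y) \<cdot> (\<one>\<^bsub>y\<^esub> \<cdot> y)"
    by (simp add: local_unit_central mult_assoc)
  also have "\<dots> \<preceq> (x \<sslash> y) \<cdot> y"
    using rdiv_mult_le by (rule mult_left_mono)
  also have "\<dots> \<preceq> x"
    by (rule rdiv_mult_le)
  finally show ?thesis
    by (simp add: le_rdiv_iff)
qed

lemma local_unit_le_local_unit_ldiv: "\<one>\<^bsub>x\<^esub> \<preceq> \<one>\<^bsub>x \<setminus> y\<^esub>"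
proof -
  have "x \<cdot> (\<one>\<^bsub>x\<^esub> \<cdot> (x \<setminus> y)) = \<one>\<^bsub>x\<^esub> \<cdot> x \<cdot> (x \<setminus> y)"
    by (simp add: local_unit_central mult_assoc)
  also have "\<dots> \<preceq> x \<cdot> (x \<setminus> y)"
    using rdiv_mult_le by (rule mult_right_mono)
  also have "\<dots> \<preceq> y"
    by (rule mult_ldiv_le)
  finally show ?thesis
    by (simp add: le_rdiv_iff le_ldiv_iff)
qed

lemma local_unit_le_local_unit_ldiv_right: "\<one>\<^bsub>y\<^esub> \<preceq> \<one>\<^bsub>x \<setminus> y\<^esub>"
proof -
  have "x \<cdot> (\<one>\<^bsub>y\<^esub> \<cdot> (x \<setminus> y)) = \<one>\<^bsub>y\<^esub> \<cdot> (x \<cdot> (x \<setminus> y))"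
    by (metis local_unit_central mult_assoc)
  also have "\<dots> \<preceq> \<one>\<^bsub>y\<^esub> \<cdot> y"
    using mult_ldiv_le by (rule mult_left_mono)
  also have "\<dots> \<preceq> y"
    by (rule rdiv_mult_le)
  finally show ?thesis
    by (simp add: le_rdiv_iff le_ldiv_iff)
qed

lemma local_unit_ldiv_self_le: "\<one>\<^bsub>x \<setminus> x\<^esub> \<preceq> \<one>\<^bsub>\<one>\<^bsub>x\<^esub>\<^esub>"
proof -
  let ?e = "x \<setminus> x"
  have "x \<cdot> \<one>\<^bsub>?e\<^esub> \<cdot> ?e \<preceq> x \<cdot> ?e"
    unfolding mult_assoc using rdiv_mult_le by (rule mult_left_mono)
  also have "\<dots> \<preceq> x"
    by (rule mult_ldiv_le)
  finally have "x \<cdot> \<one>\<^bsub>?e\<^esub> \<preceq> x \<sslash> ?e"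
    by (simp add: le_rdiv_iff)
  have "\<one>\<^bsub>?e\<^esub> \<cdot> \<one>\<^bsub>x\<^esub> \<cdot> x = x \<cdot> \<one>\<^bsub>?e\<^esub> \<cdot> \<one>\<^bsub>x\<^esub>"
    by (metis local_unit_central mult_assoc)
  also have "\<dots> \<preceq> (x \<sslash> ?e) \<cdot> \<one>\<^bsub>x\<^esub>"
    using \<open>x \<cdot> \<one>\<^bsub>?e\<^esub> \<preceq> x \<sslash> ?e\<close> by (rule mult_right_mono)
  also have "\<dots> \<preceq> (x \<sslash> ?e) \<cdot> ?e"
    using local_unit_le_ldiv_self by (rule mult_left_mono)
  also have "\<dots> \<preceq> x"
    by (rule rdiv_mult_le)
  finally show ?thesis
    by (simp add: le_rdiv_iff)
qed

lemma ldiv_self_eq_local_unit_if_idem: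
  assumes "\<one>\<^bsub>\<one>\<^bsub>x\<^esub>\<^esub> = \<one>\<^bsub>x\<^esub>"
  shows "x \<setminus> x = \<one>\<^bsub>x\<^esub>"
proof (rule le_antisym)
  have "x \<setminus> x \<preceq> \<one>\<^bsub>x \<setminus> x\<^esub>"
    by (rule ldiv_self_le_local_unit)
  also have "\<dots> \<preceq> \<one>\<^bsub>\<one>\<^bsub>x\<^esub>\<^esub>"
    by (rule local_unit_ldiv_self_le)
  finally show "x \<setminus> x \<preceq> \<one>\<^bsub>x\<^esub>"
    using assms by simp
  show "\<one>\<^bsub>x\<^esub> \<preceq> x \<setminus> x"
    by (rule local_unit_le_ldiv_self)
qed

lemma ldiv_self_eq_local_unit_if_local_unit_ldiv_self:
  assumes "\<one>\<^bsub>x \<setminus> x\<^esub> = \<one>\<^bsub>x\<^esub>"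
  shows "x \<setminus> x = \<one>\<^bsub>x\<^esub>"
  using ldiv_self_le_local_unit local_unit_le_ldiv_self assms le_antisym by metis

lemma H2_imp_ldiv_self_eq_local_unit:
  "H2 (\<cdot>) (\<setminus>) (\<sslash>) \<Longrightarrow> x \<setminus> x = \<one>\<^bsub>x\<^esub>"
  unfolding H2_def unit_of_def by (blast intro: ldiv_self_eq_local_unit_if_idem)

lemma H3_imp_ldiv_self_eq_local_unit:
  "H3 (\<cdot>) (\<setminus>) (\<sslash>) \<Longrightarrow> x \<setminus> x = \<one>\<^bsub>x\<^esub>"
  unfolding H3_def unit_of_def by (blast intro: ldiv_self_eq_local_unit_if_local_unit_ldiv_self)

lemma H2_imp_H1:
  assumes "H2 (\<cdot>) (\<setminus>) (\<sslash>)"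
  shows "H1 (\<cdot>) (\<setminus>) (\<sslash>)"
  unfolding H1_def unit_of_def
proof (intro allI impI)
  have H2: "\<one>\<^bsub>x \<sslash> y\<^esub> = \<one>\<^bsub>x\<^esub>" if "\<one>\<^bsub>x\<^esub> = \<one>\<^bsub>y\<^esub>" for x y
    using assms that unfolding H2_def unit_of_def by blast
  fix x y
  assume "\<one>\<^bsub>x\<^esub> = \<one>\<^bsub>y\<^esub>"
  then have "\<one>\<^bsub>x \<sslash> y\<^esub> = \<one>\<^bsub>x\<^esub>"
    by (rule H2)
  have "\<one>\<^bsub>x \<cdot> y\<^esub> \<preceq> \<one>\<^bsub>x \<sslash> (x \<cdot> y)\<^esub>"
    by (rule local_unit_le_local_unit_rdiv_right)
  also have "\<dots> = \<one>\<^bsub>(x \<sslash> y) \<sslash> x\<^esub>"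
    by (simp add: rdiv_mult)
  also have "\<dots> = \<one>\<^bsub>x\<^esub>"
    using H2 \<open>\<one>\<^bsub>x \<sslash> y\<^esub> = \<one>\<^bsub>x\<^esub>\<close> by metis
  finally show "\<one>\<^bsub>x \<cdot> y\<^esub> = \<one>\<^bsub>x\<^esub>"
    using local_unit_le_local_unit_mult le_antisym by blast
qed

lemma H2_imp_H3:
  assumes "H2 (\<cdot>) (\<setminus>) (\<sslash>)"
  shows "H3 (\<cdot>) (\<setminus>) (\<sslash>)"
  unfolding H3_def unit_of_def
proof (intro allI impI)
  have H2: "\<one>\<^bsub>x \<sslash> y\<^esub> = \<one>\<^bsub>x\<^esub>" if "\<one>\<^bsub>x\<^esub> = \<one>\<^bsub>y\<^esub>" for x y
    using assms that unfolding H2_def unit_of_def by blast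
  fix x y
  assume "\<one>\<^bsub>x\<^esub> = \<one>\<^bsub>y\<^esub>"
  have "\<one>\<^bsub>x \<setminus> y\<^esub> \<preceq> \<one>\<^bsub>(x \<setminus> y) \<sslash> y\<^esub>"
    by (rule local_unit_le_local_unit_rdiv)
  also have "\<dots> = \<one>\<^bsub>x \<setminus> \<one>\<^bsub>x\<^esub>\<^esub>"
    using \<open>\<one>\<^bsub>x\<^esub> = \<one>\<^bsub>y\<^esub>\<close> by (simp add: ldiv_rdiv_assoc)
  also have "\<dots> = \<one>\<^bsub>\<one>\<^bsub>x\<^esub> \<sslash> x\<^esub>"
    using H2_imp_ldiv_self_eq_local_unit [OF assms] by (simp flip: ldiv_rdiv_assoc)
  also have "\<dots> = \<one>\<^bsub>x\<^esub>"
    using H2 by metis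
  finally show "\<one>\<^bsub>x \<setminus> y\<^esub> = \<one>\<^bsub>x\<^esub>"
    using local_unit_le_local_unit_ldiv le_antisym by blast
qed

lemma H3_imp_H2:
  assumes "H3 (\<cdot>) (\<setminus>) (\<sslash>)"
  shows "H2 (\<cdot>) (\<setminus>) (\<sslash>)"
  unfolding H2_def unit_of_def
proof (intro allI impI)
  have H3: "\<one>\<^bsub>x \<setminus> y\<^esub> = \<one>\<^bsub>x\<^esub>" if "\<one>\<^bsub>x\<^esub> = \<one>\<^bsub>y\<^esub>" for x y
    using assms that unfolding H3_def unit_of_def by blast
  note ldiv_self = H3_imp_ldiv_self_eq_local_unit [OF assms]
  fix x y
  assume "\<one>\<^bsub>x\<^esub> = \<one>\<^bsub>y\<^esub>"
  have "\<one>\<^bsub>x \<sslash> y\<^esub> \<preceq> \<one>\<^bsub>x \<setminus> (x \<sslash> y)\<^esub>"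
    by (rule local_unit_le_local_unit_ldiv_right)
  also have "\<dots> = \<one>\<^bsub>\<one>\<^bsub>y\<^esub> \<sslash> y\<^esub>"
    using \<open>\<one>\<^bsub>x\<^esub> = \<one>\<^bsub>y\<^esub>\<close> ldiv_self by (simp flip: ldiv_rdiv_assoc)
  also have "\<dots> = \<one>\<^bsub>y \<setminus> \<one>\<^bsub>y\<^esub>\<^esub>"
    using ldiv_self by (simp flip: ldiv_rdiv_assoc)
  also have "\<dots> = \<one>\<^bsub>y\<^esub>"
    using H3 ldiv_self by metis
  finally show "\<one>\<^bsub>x \<sslash> y\<^esub> = \<one>\<^bsub>x\<^esub>"
    using \<open>\<one>\<^bsub>x\<^esub> = \<one>\<^bsub>y\<^esub>\<close> local_unit_le_local_unit_rdiv le_antisym by metis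
qed

end

theorem proposition3p4:
  fixes le :: "'a \<Rightarrow> 'a \<Rightarrow> bool" and mult ldiv rdiv :: "'a \<Rightarrow> 'a \<Rightarrow> 'a"
  assumes "residuated_semigroup le mult ldiv rdiv"
    and "\<forall>x y. mult (unit_of rdiv x) y = mult y (unit_of rdiv x)"
  shows "(H2 mult ldiv rdiv \<longrightarrow> (\<forall>x. ldiv x x = rdiv x x))
       \<and> (H3 mult ldiv rdiv \<longrightarrow> (\<forall>x. ldiv x x = rdiv x x))
       \<and> (H2 mult ldiv rdiv \<longleftrightarrow> H3 mult ldiv rdiv)
       \<and> (H2 mult ldiv rdiv \<longrightarrow> H1 mult ldiv rdiv)"
proof -
  interpret residuated_central_units le mult ldiv rdiv
    using assms by unfold_locales (simp_all add: unit_of_def)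
  show ?thesis
    using H2_imp_ldiv_self_eq_local_unit H3_imp_ldiv_self_eq_local_unit
      H2_imp_H3 H3_imp_H2 H2_imp_H1 by blast
qed

end
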